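(* Let $(A,m)$ be a curved $A_\infty$-algebra over a field $\mathbf{F}$ and $m=\sum_{k\ge0}m_k\in\prod_kC^{k,2-k}(A,A)$. Then $m=[m,\mathbf{I}-\mathbf{E}]$; in particular $[m]=0\in\mathrm{HH}^2(A,A)$.
   Context: A curved $A_\infty$-algebra $(A,m)$ over $\mathbf{F}$ is a $\mathbf{Z}$-graded vector space $A=\bigoplus_kA^k$ with graded linear maps $m_n:A^{\otimes n}\to A$ for $n\ge0$ (with $m_0$ identified with $m_0(\mathbf{1})\in A^2$) of degree $2-n$, with $m_k=0$ for $k\gg1$, satisfying for every $n\ge0$: $\sum_{n=r+s+t}(-1)^{\delta(x_1,\dots,x_r)}m_{r+1+t}(x_1,\dots,x_r,m_s(x_{r+1},\dots,x_{r+s}),x_{r+s+1},\dots,x_n)=0$ ($r,t,s\ge0$), where $\delta(x_1,\dots,x_r)=\sum_{i=1}^r(|x_i|-1)$. Let $C^{n,k}(A,A)=\mathrm{Hom}^k(A^{\otimes n},A)=\prod_i\mathrm{Hom}((A^{\otimes n})^i,A^{i+k})$ for $n\ge0$ (with $A^{\otimes0}=\mathbf{F}$, so $C^{0,k}\cong A^k$). For $f\in C^{n,k}$, $g\in C^{m,l}$ the Gerstenhaber bracket is $[f,g]=\sum_{i=0}^{n-1}(-1)^{\delta_1}f(\mathbf{I}^{\otimes i}\otimes g\otimes\mathbf{I}^{\otimes n-i-1})-(-1)^{(n+k-1)(m+l-1)}\sum_{i=0}^{m-1}(-1)^{\delta_2}g(\mathbf{I}^{\otimes i}\otimes f\otimes\mathbf{I}^{\otimes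 m-i-1})$, with $\delta_1=(n-1)(m-1)+(n-1)l+i(m-1)$, $\delta_2=(m-1)(n-1)+(m-1)k+i(n-1)$, empty sums $=0$, tensor products of maps evaluated with the Koszul sign rule, extended bilinearly. $D=[m,-]$ and $\mathrm{HH}^*(A,A)=H^*(\prod_iC^{i,*-i}(A,A),D)$. $\mathbf{I}\in C^{1,0}$ is the identity, and the euler derivation element $\mathbf{E}\in C^{1,0}$ is $\mathbf{E}(\alpha)=\deg(\alpha)\,\alpha$ for homogeneous $\alpha$. *)

theory Defs
  imports Main "HOL.Vector_Spaces"
begin

(* A Z-graded vector space over a field 'f: an ambient F-vector space 'v (vector_space scale)
   together with subspaces G d (the homogeneous pieces A^d) such that every element is
   uniquely a finite sum of homogeneous components, i.e. 'v = (+)_d G d. *)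
definition is_decomp :: "(int \<Rightarrow> 'v set) \<Rightarrow> 'v::ab_group_add \<Rightarrow> (int \<Rightarrow> 'v) \<Rightarrow> bool" where
  "is_decomp G v c \<longleftrightarrow> finite {d. c d \<noteq> 0} \<and> (\<forall>d. c d \<in> G d) \<and> v = sum c {d. c d \<noteq> 0}"

definition graded_vs :: "('f::field \<Rightarrow> 'v::ab_group_add \<Rightarrow> 'v) \<Rightarrow> (int \<Rightarrow> 'v set) \<Rightarrow> bool" where
  "graded_vs scale G \<longleftrightarrow> vector_space scale \<and> (\<forall>d. module.subspace scale (G d))
     \<and> (\<forall>v. \<exists>!c. is_decomp G v c)"

definition proj :: "(int \<Rightarrow> 'v set) \<Rightarrow> int \<Rightarrow> 'v::ab_group_add \<Rightarrow> 'v" where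
  "proj G d v = (THE c. is_decomp G v c) d"

definition euler :: "('f::field \<Rightarrow> 'v::ab_group_add \<Rightarrow> 'v) \<Rightarrow> (int \<Rightarrow> 'v set) \<Rightarrow> 'v \<Rightarrow> 'v" where
  "euler scale G v = (\<Sum>d\<in>{d. proj G d v \<noteq> 0}. scale (of_int d) (proj G d v))"

definition sgnv :: "int \<Rightarrow> 'v::ab_group_add \<Rightarrow> 'v" where
  "sgnv z v = (if even z then v else - v)"

(* v |-> (-1)^(l*deg v) v, extended linearly (Koszul sign of passing a map of degree l) *)
definition ksign :: "(int \<Rightarrow> 'v set) \<Rightarrow> int \<Rightarrow> 'v::ab_group_add \<Rightarrow> 'v" where
  "ksign G l v = (\<Sum>d\<in>{d. proj G d v \<noteq> 0}. sgnv (l * d) (proj G d v))"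

(* n-ary maps A^{(x) n} -> A are represented as multilinear functions on lists of length n
   (value 0 on lists of other lengths). C^{n,k}(A,A) = Hom^k(A^{(x)n},A). *)
definition Cnk :: "('f::field \<Rightarrow> 'v::ab_group_add \<Rightarrow> 'v) \<Rightarrow> (int \<Rightarrow> 'v set) \<Rightarrow> nat \<Rightarrow> int
     \<Rightarrow> ('v list \<Rightarrow> 'v) set" where
  "Cnk scale G n k = {f.
     (\<forall>xs. length xs \<noteq> n \<longrightarrow> f xs = 0)
   \<and> (\<forall>xs j a b. length xs = n \<and> j < n \<longrightarrow> f (xs[j := a + b]) = f (xs[j := a]) + f (xs[j := b]))
   \<and> (\<forall>xs j a c. length xs = n \<and> j < n \<longrightarrow> f (xs[j := scale c a]) = scale c (f (xs[j := a])))
   \<and> (\<forall>xs ds. length xs = n \<and> length ds = n \<and> (\<forall>j<n. xs ! j \<in> G (ds ! j))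
        \<longrightarrow> f xs \<in> G (sum_list ds + k))}"

(* Gerstenhaber bracket [f,g] of f in C^{n,k}, g in C^{m,l}; the tensor product
   I^{(x)i} (x) g (x) I^{(x)...} is evaluated with the Koszul sign rule, i.e. the first
   i inputs x_j pick up (-1)^{l |x_j|}. *)
definition gbr :: "(int \<Rightarrow> 'v set) \<Rightarrow> int \<Rightarrow> int \<Rightarrow> nat \<Rightarrow> nat
     \<Rightarrow> ('v::ab_group_add list \<Rightarrow> 'v) \<Rightarrow> ('v list \<Rightarrow> 'v) \<Rightarrow> 'v list \<Rightarrow> 'v" where
  "gbr G k l n m f g xs =
    (if (n = 0 \<and> m = 0) \<or> length xs \<noteq> n + m - 1 then 0 else
      (\<Sum>i<n. sgnv ((int n - 1) * (int m - 1) + (int n - 1) * l + int i * (int m - 1))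
                 (f (map (ksign G l) (take i xs) @ [g (take m (drop i xs))] @ drop (i + m) xs)))
    - sgnv ((int n + k - 1) * (int m + l - 1))
      (\<Sum>i<m. sgnv ((int m - 1) * (int n - 1) + (int m - 1) * k + int i * (int n - 1))
                 (g (map (ksign G k) (take i xs) @ [f (take n (drop i xs))] @ drop (i + n) xs))))"

(* Hochschild cochains of total degree p: elements of prod_n C^{n,p-n}(A,A),
   represented as families F with F n the arity-n component. *)
definition cochain :: "('f::field \<Rightarrow> 'v::ab_group_add \<Rightarrow> 'v) \<Rightarrow> (int \<Rightarrow> 'v set) \<Rightarrow> int
     \<Rightarrow> (nat \<Rightarrow> 'v list \<Rightarrow> 'v) \<Rightarrow> bool" where
  "cochain scale G p F \<longleftrightarrow> (\<forall>n. F n \<in> Cnk scale G n (p - int n))"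

definition cbr :: "(int \<Rightarrow> 'v set) \<Rightarrow> int \<Rightarrow> int \<Rightarrow> (nat \<Rightarrow> 'v::ab_group_add list \<Rightarrow> 'v)
     \<Rightarrow> (nat \<Rightarrow> 'v list \<Rightarrow> 'v) \<Rightarrow> nat \<Rightarrow> 'v list \<Rightarrow> 'v" where
  "cbr G p q F H N xs =
     (\<Sum>n\<le>N + 1. gbr G (p - int n) (q - int (N + 1 - n)) n (N + 1 - n) (F n) (H (N + 1 - n)) xs)"

(* curved A-infinity structure m = (m_n)_n, m_n in C^{n,2-n}, m_n = 0 for n >> 1,
   satisfying the A-infinity relations (stated on homogeneous inputs x_j in A^{ds_j};
   by multilinearity this determines them on all inputs). *)
definition curved_Ainf :: "('f::field \<Rightarrow> 'v::ab_group_add \<Rightarrow> 'v) \<Rightarrow> (int \<Rightarrow> 'v set)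
     \<Rightarrow> (nat \<Rightarrow> 'v list \<Rightarrow> 'v) \<Rightarrow> bool" where
  "curved_Ainf scale G m \<longleftrightarrow>
     (\<forall>n. m n \<in> Cnk scale G n (2 - int n))
   \<and> finite {n. m n \<noteq> (\<lambda>_. 0)}
   \<and> (\<forall>n xs ds. length xs = n \<and> length ds = n \<and> (\<forall>j<n. xs ! j \<in> G (ds ! j)) \<longrightarrow>
        (\<Sum>r\<le>n. \<Sum>s\<le>n - r. sgnv (\<Sum>j<r. ds ! j - 1)
            (m (n - s + 1) (take r xs @ [m s (take s (drop r xs))] @ drop (r + s) xs))) = 0)"

definition IminusE :: "('f::field \<Rightarrow> 'v::ab_group_add \<Rightarrow> 'v) \<Rightarrow> (int \<Rightarrow> 'v set)
     \<Rightarrow> nat \<Rightarrow> 'v list \<Rightarrow> 'v" where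
  "IminusE scale G n xs = (if n = 1 \<and> length xs = 1 then hd xs - euler scale G (hd xs) else 0)"

end

theory Submission
  imports Defs
begin

(*
  Only the grading of m enters, not the A-infinity relations. For f in C^{n,k} the Euler
  derivation satisfies E (f x) = sum_i f (x_1, ..., E x_i, ..., x_n) + k f x: on homogeneous
  inputs both sides are (|x_1| + ... + |x_n| + k) f x, and both sides are multilinear. Hence
  [f, I - E] = sum_i f (..., (1 - E) x_i, ...) - (1 - E) (f x) = (n + k - 1) f. Every component
  m_n lies in C^{n,2-n}, so [m, I - E] = m: the class of m is the coboundary of the
  1-cochain I - E.
*)

definition multiadditive :: "nat \<Rightarrow> ('a::ab_group_add list \<Rightarrow> 'b::ab_group_add) \<Rightarrow> bool" where
  "multiadditive n F \<longleftrightarrow>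
     (\<forall>xs j a b. length xs = n \<and> j < n \<longrightarrow> F (xs[j := a + b]) = F (xs[j := a]) + F (xs[j := b]))"

lemma multiadditiveD:
  "multiadditive n F \<Longrightarrow> length xs = n \<Longrightarrow> j < n \<Longrightarrow> F (xs[j := a + b]) = F (xs[j := a]) + F (xs[j := b])"
  unfolding multiadditive_def by blast

lemma multiadditive_Cnk: "f \<in> Cnk scale G n k \<Longrightarrow> multiadditive n f"
  unfolding Cnk_def multiadditive_def by blast

lemma multiadditive_update_zero:
  assumes "multiadditive n F" "length xs = n" "j < n"
  shows "F (xs[j := 0]) = 0"
  using multiadditiveD[OF assms, of 0 0] by simp

lemma multiadditive_update_diff:
  assumes "multiadditive n F" "length xs = n" "j < n"
  shows "F (xs[j := a - b]) = F (xs[j := a]) - F (xs[j := b])"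
  using multiadditiveD[OF assms, of "a - b" b] by (simp add: algebra_simps)

lemma multiadditive_update_sum:
  assumes "multiadditive n F" "length xs = n" "j < n" "finite S"
  shows "F (xs[j := sum c S]) = (\<Sum>d\<in>S. F (xs[j := c d]))"
  using assms(4)
proof (induction S rule: finite_induct)
  case empty
  then show ?case using multiadditive_update_zero[OF assms(1-3)] by simp
next
  case (insert d S)
  then show ?case using multiadditiveD[OF assms(1-3), of "c d" "sum c S"] by simp
qed

lemma multiadditive_diff:
  "multiadditive n F \<Longrightarrow> multiadditive n H \<Longrightarrow> multiadditive n (\<lambda>xs. F xs - H xs)"
  unfolding multiadditive_def by (simp add: algebra_simps)

lemma multiadditive_sum:
  "(\<And>i. i \<in> I \<Longrightarrow> multiadditive n (F i)) \<Longrightarrow> multiadditive n (\<lambda>xs. \<Sum>i\<in>I. F i xs)"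
  unfolding multiadditive_def by (simp add: sum.distrib)

lemma multiadditive_comp:
  assumes "\<And>a b. \<phi> (a + b) = \<phi> a + \<phi> b" "multiadditive n F"
  shows "multiadditive n (\<lambda>xs. \<phi> (F xs))"
  using assms unfolding multiadditive_def by simp

lemma multiadditive_update:
  assumes \<phi>: "\<And>a b. \<phi> (a + b) = \<phi> a + \<phi> b" and F: "multiadditive n F"
  shows "multiadditive n (\<lambda>xs. F (xs[i := \<phi> (xs ! i)]))"
  unfolding multiadditive_def
proof (intro allI impI)
  fix xs :: "'a list" and j a b
  assume len: "length xs = n \<and> j < n"
  show "F ((xs[j := a + b])[i := \<phi> (xs[j := a + b] ! i)])
      = F ((xs[j := a])[i := \<phi> (xs[j := a] ! i)]) + F ((xs[j := b])[i := \<phi> (xs[j := b] ! i)])"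
  proof (cases "i = j")
    case True
    then show ?thesis using multiadditiveD[OF F, of xs j] len by (simp add: \<phi>)
  next
    case False
    then show ?thesis
      using multiadditiveD[OF F, of "xs[i := \<phi> (xs ! i)]" j] len by (simp add: list_update_swap)
  qed
qed

lemma Cnk_update_scale:
  "f \<in> Cnk scale G n k \<Longrightarrow> length xs = n \<Longrightarrow> j < n \<Longrightarrow> f (xs[j := scale c (xs ! j)]) = scale c (f xs)"
proof -
  assume "f \<in> Cnk scale G n k" "length xs = n" "j < n"
  then have "f (xs[j := scale c (xs ! j)]) = scale c (f (xs[j := xs ! j]))"
    unfolding Cnk_def by blast
  then show ?thesis by simp
qed

lemma Cnk_in_G:
  "f \<in> Cnk scale G n k \<Longrightarrow> length xs = n \<Longrightarrow> length ds = n \<Longrightarrow> \<forall>j<n. xs ! j \<in> G (ds ! j)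
   \<Longrightarrow> f xs \<in> G (sum_list ds + k)"
  unfolding Cnk_def by blast

lemma Cnk_length: "f \<in> Cnk scale G n k \<Longrightarrow> length xs \<noteq> n \<Longrightarrow> f xs = 0"
  unfolding Cnk_def by blast

lemma Cnk_zero_slot:
  assumes f: "f \<in> Cnk scale G n k"
  shows "f (as @ 0 # bs) = 0"
proof (cases "length (as @ 0 # bs) = n")
  case True
  have "f ((as @ 0 # bs)[length as := 0]) = 0"
    using multiadditive_update_zero[OF multiadditive_Cnk[OF f] True, of "length as"] True by simp
  then show ?thesis by simp
qed (use Cnk_length[OF f] in blast)

lemma sgnv_0 [simp]: "sgnv z 0 = 0"
  by (simp add: sgnv_def)

lemma gbr_zero_right:
  "f \<in> Cnk scale G n k \<Longrightarrow> gbr G k l n m f (\<lambda>_. 0) xs = 0"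
  by (simp add: gbr_def Cnk_zero_slot)

lemma sgnv_even: "even z \<Longrightarrow> sgnv z v = v"
  by (simp add: sgnv_def)

locale graded_space =
  fixes scale :: "'f::field \<Rightarrow> 'v::ab_group_add \<Rightarrow> 'v" and G :: "int \<Rightarrow> 'v set"
  assumes graded_vs: "graded_vs scale G"
begin

sublocale vector_space scale
  using graded_vs by (simp add: graded_vs_def)

lemma subspace_G: "subspace (G d)"
  using graded_vs by (simp add: graded_vs_def)

lemma is_decomp_proj: "is_decomp G v (\<lambda>d. proj G d v)"
proof -
  have "\<exists>!c. is_decomp G v c" using graded_vs by (simp add: graded_vs_def)
  from theI'[OF this] show ?thesis unfolding proj_def by simp
qed

lemma proj_eqI: "is_decomp G v c \<Longrightarrow> proj G d v = c d"
  using graded_vs unfolding graded_vs_def proj_def by (metis the1_equality)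

lemma finite_proj_support: "finite {d. proj G d v \<noteq> 0}"
  using is_decomp_proj[of v] by (simp add: is_decomp_def)

lemma proj_in_G: "proj G d v \<in> G d"
  using is_decomp_proj[of v] by (simp add: is_decomp_def)

lemma sum_support_superset:
  "finite S \<Longrightarrow> {d. c d \<noteq> 0} \<subseteq> S \<Longrightarrow> sum c {d. c d \<noteq> 0} = sum c S"
  by (rule sum.mono_neutral_left) auto

lemma sum_proj:
  "finite S \<Longrightarrow> {d. proj G d v \<noteq> 0} \<subseteq> S \<Longrightarrow> (\<Sum>d\<in>S. proj G d v) = v"
  using is_decomp_proj[of v] sum_support_superset[of S "\<lambda>d. proj G d v"]
  by (simp add: is_decomp_def)

lemma proj_homogeneous: "x \<in> G e \<Longrightarrow> proj G d x = (if d = e then x else 0)"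
  by (rule proj_eqI)
    (auto simp: is_decomp_def subspace_0[OF subspace_G] sum_support_superset[of "{e}"]
          intro: finite_subset[of _ "{e}"])

lemma proj_add: "proj G d (u + v) = proj G d u + proj G d v"
proof (rule proj_eqI)
  let ?S = "{d. proj G d u \<noteq> 0} \<union> {d. proj G d v \<noteq> 0}"
  let ?c = "\<lambda>d. proj G d u + proj G d v"
  have S: "finite ?S" "{d. ?c d \<noteq> 0} \<subseteq> ?S"
    using finite_proj_support by auto
  have "sum ?c {d. ?c d \<noteq> 0} = (\<Sum>d\<in>?S. proj G d u) + (\<Sum>d\<in>?S. proj G d v)"
    using sum_support_superset[OF S] by (simp add: sum.distrib)
  also have "\<dots> = u + v"
    using S(1) by (simp add: sum_proj)
  finally show "is_decomp G (u + v) ?c"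
    unfolding is_decomp_def
    using finite_subset[OF S(2,1)] subspace_add[OF subspace_G] proj_in_G by simp
qed

lemma proj_scale: "proj G d (scale a v) = scale a (proj G d v)"
proof (rule proj_eqI)
  let ?S = "{d. proj G d v \<noteq> 0}"
  let ?c = "\<lambda>d. scale a (proj G d v)"
  have S: "finite ?S" "{d. ?c d \<noteq> 0} \<subseteq> ?S"
    using finite_proj_support by auto
  have "sum ?c {d. ?c d \<noteq> 0} = scale a v"
    using sum_support_superset[OF S] sum_proj[OF S(1) order_refl] by (simp add: scale_sum_right[symmetric])
  then show "is_decomp G (scale a v) ?c"
    unfolding is_decomp_def
    using finite_subset[OF S(2,1)] subspace_scale[OF subspace_G] proj_in_G by simp
qed

lemma euler_eq_sum:
  "finite S \<Longrightarrow> {d. proj G d v \<noteq> 0} \<subseteq> S \<Longrightarrow>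
   euler scale G v = (\<Sum>d\<in>S. scale (of_int d) (proj G d v))"
  unfolding euler_def by (rule sum.mono_neutral_left) auto

lemma euler_add: "euler scale G (u + v) = euler scale G u + euler scale G v"
proof -
  let ?S = "{d. proj G d u \<noteq> 0} \<union> {d. proj G d v \<noteq> 0}"
  have S: "finite ?S" using finite_proj_support by simp
  have "euler scale G (u + v) = (\<Sum>d\<in>?S. scale (of_int d) (proj G d (u + v)))"
    by (rule euler_eq_sum[OF S]) (auto simp: proj_add)
  also have "\<dots> = euler scale G u + euler scale G v"
    using euler_eq_sum[OF S, of u] euler_eq_sum[OF S, of v]
    by (simp add: proj_add scale_right_distrib sum.distrib)
  finally show ?thesis .
qed

lemma euler_scale: "euler scale G (scale a v) = scale a (euler scale G v)"
proof -
  let ?S = "{d. proj G d v \<noteq> 0}"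
  have S: "finite ?S" using finite_proj_support by simp
  have "euler scale G (scale a v) = (\<Sum>d\<in>?S. scale (of_int d) (proj G d (scale a v)))"
    by (rule euler_eq_sum[OF S]) (auto simp: proj_scale)
  then show ?thesis
    using euler_eq_sum[OF S order_refl] by (simp add: proj_scale scale_sum_right mult.commute)
qed

lemma euler_homogeneous: "x \<in> G d \<Longrightarrow> euler scale G x = scale (of_int d) x"
  by (subst euler_eq_sum[of "{d}"]) (auto simp: proj_homogeneous)

lemma ksign_0: "ksign G 0 = (\<lambda>v. v)"
  unfolding ksign_def sgnv_def using sum_proj[OF finite_proj_support order_refl] by simp

lemma gbr_arity_one_degree_zero:
  assumes len: "length xs = n"
  shows "gbr G k 0 n 1 f g xs = (\<Sum>i<n. f (xs[i := g [xs ! i]])) - g [f xs]"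
proof -
  have "sgnv ((int n - 1) * (int 1 - 1) + (int n - 1) * 0 + int i * (int 1 - 1))
        (f (map (ksign G 0) (take i xs) @ [g (take 1 (drop i xs))] @ drop (i + 1) xs))
      = f (xs[i := g [xs ! i]])" if "i < n" for i
    using that len by (simp add: sgnv_even ksign_0 take_Suc_conv_app_nth upd_conv_take_nth_drop)
  moreover have "(\<Sum>i<1. sgnv ((int 1 - 1) * (int n - 1) + (int 1 - 1) * k + int i * (int n - 1))
        (g (map (ksign G k) (take i xs) @ [f (take n (drop i xs))] @ drop (i + n) xs))) = g [f xs]"
    using len by (simp add: sgnv_even)
  ultimately show ?thesis
    unfolding gbr_def using len by (simp add: sgnv_even)
qed

lemma multiadditive_eq_0_if_homogeneous:
  assumes F: "multiadditive n F"
    and hom: "\<And>xs ds. length xs = n \<Longrightarrow> length ds = n \<Longrightarrow> \<forall>j<n. xs ! j \<in> G (ds ! j) \<Longrightarrow> F xs = 0"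
    and len: "length xs = n"
  shows "F xs = 0"
proof -
  have "F xs = 0" if "length xs = n" "\<forall>j. k \<le> j \<and> j < n \<longrightarrow> (\<exists>d. xs ! j \<in> G d)" for k xs
    using that
  proof (induction k arbitrary: xs)
    case 0
    define ds where "ds = map (\<lambda>j. SOME d. xs ! j \<in> G d) [0..<n]"
    have "\<forall>j<n. xs ! j \<in> G (ds ! j)"
      using "0.prems"(2) unfolding ds_def by (auto intro: someI_ex)
    then show ?case using hom[of xs ds] "0.prems"(1) ds_def by simp
  next
    case (Suc k)
    show ?case
    proof (cases "k < n")
      case False
      then show ?thesis using Suc by auto
    next
      case True
      let ?S = "{d. proj G d (xs ! k) \<noteq> 0}"
      have "F xs = F (xs[k := \<Sum>d\<in>?S. proj G d (xs ! k)])"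
        by (simp add: sum_proj finite_proj_support)
      also have "\<dots> = (\<Sum>d\<in>?S. F (xs[k := proj G d (xs ! k)]))"
        using multiadditive_update_sum[OF F Suc.prems(1) True finite_proj_support] .
      also have "\<dots> = 0"
      proof (rule sum.neutral, rule ballI)
        fix d
        have "\<exists>e. xs[k := proj G d (xs ! k)] ! j \<in> G e" if "k \<le> j" "j < n" for j
        proof (cases "j = k")
          case True
          then show ?thesis using Suc.prems(1) \<open>k < n\<close> proj_in_G by auto
        next
          case False
          then show ?thesis using Suc.prems(2) that by auto
        qed
        then show "F (xs[k := proj G d (xs ! k)]) = 0"
          using Suc.IH Suc.prems(1) by simp
      qed
      finally show ?thesis .
    qed
  qed
  moreover have "\<forall>j. n \<le> j \<and> j < n \<longrightarrow> (\<exists>d. xs ! j \<in> G d)"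
    by auto
  ultimately show ?thesis using len by blast
qed

lemma euler_Cnk:
  assumes f: "f \<in> Cnk scale G n k" and len: "length xs = n"
  shows "euler scale G (f xs) = (\<Sum>i<n. f (xs[i := euler scale G (xs ! i)])) + scale (of_int k) (f xs)"
proof -
  define F where "F xs = euler scale G (f xs) - (\<Sum>i<n. f (xs[i := euler scale G (xs ! i)]))
    - scale (of_int k) (f xs)" for xs
  have f_add: "multiadditive n f"
    using f by (rule multiadditive_Cnk)
  have "multiadditive n (\<lambda>xs. euler scale G (f xs))"
    by (rule multiadditive_comp[OF euler_add f_add])
  moreover have "multiadditive n (\<lambda>xs. \<Sum>i<n. f (xs[i := euler scale G (xs ! i)]))"
    by (rule multiadditive_sum, rule multiadditive_update[OF euler_add f_add])
  moreover have "multiadditive n (\<lambda>xs. scale (of_int k) (f xs))"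
    by (rule multiadditive_comp[OF scale_right_distrib f_add])
  ultimately have "multiadditive n F"
    unfolding F_def by (intro multiadditive_diff)
  moreover have "F xs = 0" if l: "length xs = n" "length ds = n" and h: "\<forall>j<n. xs ! j \<in> G (ds ! j)" for xs ds
  proof -
    have "f (xs[i := euler scale G (xs ! i)]) = scale (of_int (ds ! i)) (f xs)" if "i < n" for i
      using Cnk_update_scale[OF f l(1) that] euler_homogeneous[of "xs ! i" "ds ! i"] h that by simp
    then have "(\<Sum>i<n. f (xs[i := euler scale G (xs ! i)])) = scale (of_int (sum_list ds)) (f xs)"
      using l(2) by (simp add: scale_sum_left sum_list_sum_nth lessThan_atLeast0)
    moreover have "euler scale G (f xs) = scale (of_int (sum_list ds + k)) (f xs)"
      using euler_homogeneous Cnk_in_G[OF f l h] by blast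
    ultimately show ?thesis
      unfolding F_def by (simp add: scale_left_distrib)
  qed
  ultimately have "F xs = 0"
    using multiadditive_eq_0_if_homogeneous len by blast
  then show ?thesis
    unfolding F_def diff_diff_eq right_minus_eq .
qed

lemma gbr_IminusE:
  assumes f: "f \<in> Cnk scale G n k"
  shows "gbr G k 0 n 1 f (IminusE scale G 1) xs = scale (of_int (int n + k - 1)) (f xs)"
proof (cases "length xs = n")
  case False
  then show ?thesis
    using Cnk_length[OF f] by (simp add: gbr_def)
next
  case True
  let ?E = "euler scale G"
  have "gbr G k 0 n 1 f (IminusE scale G 1) xs
      = (\<Sum>i<n. f (xs[i := xs ! i - ?E (xs ! i)])) - (f xs - ?E (f xs))"
    unfolding gbr_arity_one_degree_zero[OF True] by (simp add: IminusE_def)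
  also have "\<dots> = (\<Sum>i<n. f xs - f (xs[i := ?E (xs ! i)])) - (f xs - ?E (f xs))"
    using multiadditive_update_diff[OF multiadditive_Cnk[OF f] True] by simp
  also have "\<dots> = scale (of_nat n) (f xs) - f xs + scale (of_int k) (f xs)"
    using euler_Cnk[OF f True] scale_sum_left[of "\<lambda>_. 1" "{..<n}" "f xs"] by (simp add: sum_subtractf)
  also have "\<dots> = scale (of_int (int n + k - 1)) (f xs)"
    by (simp add: scale_left_distrib scale_left_diff_distrib)
  finally show ?thesis .
qed

lemma IminusE_neq_1: "n \<noteq> 1 \<Longrightarrow> IminusE scale G n = (\<lambda>_. 0)"
  by (simp add: IminusE_def fun_eq_iff)

lemma cbr_IminusE:
  assumes F: "cochain scale G p F"
  shows "cbr G p 1 F (IminusE scale G) N xs = scale (of_int (p - 1)) (F N xs)"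
proof -
  have FC: "F n \<in> Cnk scale G n (p - int n)" for n
    using F by (simp add: cochain_def)
  let ?T = "\<lambda>n. gbr G (p - int n) (1 - int (N + 1 - n)) n (N + 1 - n) (F n) (IminusE scale G (N + 1 - n)) xs"
  have "cbr G p 1 F (IminusE scale G) N xs = ?T N + (\<Sum>n\<in>{..N + 1} - {N}. ?T n)"
    unfolding cbr_def by (rule sum.remove) auto
  also have "(\<Sum>n\<in>{..N + 1} - {N}. ?T n) = 0"
    by (intro sum.neutral ballI) (auto simp: IminusE_neq_1 gbr_zero_right[OF FC])
  also have "?T N = scale (of_int (p - 1)) (F N xs)"
    using gbr_IminusE[OF FC[of N]] by simp
  finally show ?thesis by simp
qed

lemma IminusE_Cnk: "IminusE scale G 1 \<in> Cnk scale G 1 0"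
proof -
  have "x - euler scale G x \<in> G d" if "x \<in> G d" for x d
    unfolding euler_homogeneous[OF that]
    using that subspace_diff[OF subspace_G] subspace_scale[OF subspace_G] by blast
  then show ?thesis
    unfolding Cnk_def IminusE_def
    by (auto simp: length_Suc_conv euler_add euler_scale scale_right_diff_distrib)
qed

lemma cochain_IminusE: "cochain scale G 1 (IminusE scale G)"
  unfolding cochain_def
proof
  fix n
  show "IminusE scale G n \<in> Cnk scale G n (1 - int n)"
  proof (cases "n = 1")
    case True
    then show ?thesis using IminusE_Cnk by simp
  next
    case False
    then show ?thesis
      by (simp add: IminusE_neq_1 Cnk_def subspace_0[OF subspace_G])
  qed
qed

end

theorem theorem3p4:
  fixes scale :: "'f::field \<Rightarrow> 'v::ab_group_add \<Rightarrow> 'v"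
    and G :: "int \<Rightarrow> 'v set"
    and m :: "nat \<Rightarrow> 'v list \<Rightarrow> 'v"
  assumes "graded_vs scale G"
    and "curved_Ainf scale G m"
  shows "m = cbr G 2 1 m (IminusE scale G)
         \<and> (\<exists>h. cochain scale G 1 h \<and> cbr G 2 1 m h = m)"
proof -
  interpret graded_space scale G
    by (rule graded_space.intro) fact
  have "cochain scale G 2 m"
    using assms(2) by (simp add: curved_Ainf_def cochain_def)
  then have "cbr G 2 1 m (IminusE scale G) = m"
    by (simp add: fun_eq_iff cbr_IminusE)
  then show ?thesis
    using cochain_IminusE by auto
qed

end
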